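(* Let $\mathcal S$ be a finite set, let $\kappa$ be a real symmetric $\mathcal S\times\mathcal S$ matrix with nonnegative entries, and let $\mu,c\in(0,\infty)^{\mathcal S}$ with $c_i<\mu_i$ for all $i$. Assume $D_c^{-1}-\kappa$ is positive definite, and set $\Phi=(D_c^{-1}-\kappa)^{-1}$, \[ A_0=(I-\kappa D_c)\,D_{\mu-c}^{-1}\,(I-D_\mu\kappa),\qquad A=\tfrac12(A_0+A_0^T). \] Assume $|c|-\tfrac12\langle c,\kappa c\rangle>0$ and that the matrix $\Phi-\frac{cc^T}{|c|-\frac12\langle c,\kappa c\rangle}$ is positive definite, and let \[ B=\Bigl(\Phi-\frac{cc^T}{|c|-\frac12\langle c,\kappa c\rangle}\Bigr)^{-1}. \] Then $A+B$ is positive definite.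
   Context: For a vector $x\in\mathbb R^{\mathcal S}$, $D_x$ denotes the diagonal matrix with diagonal entries $x_i$; $|c|=\sum_{i\in\mathcal S}c_i$ is the $\ell_1$-norm; $\langle\cdot,\cdot\rangle$ is the Euclidean inner product; $I$ is the identity matrix. *)

theory Defs
  imports "HOL-Analysis.Analysis"
begin

definition diag_mat :: "real ^ 'n \<Rightarrow> real ^ 'n ^ 'n" where
  "diag_mat x = (\<chi> i j. if i = j then x $ i else 0)"

definition pos_def_mat :: "real ^ 'n ^ 'n \<Rightarrow> bool" where
  "pos_def_mat M \<longleftrightarrow> transpose M = M \<and> (\<forall>x. x \<noteq> 0 \<longrightarrow> x \<bullet> (M *v x) > 0)"

text \<open>l1-norm of a vector (sum of entries; entries here are positive).\<close>
definition l1 :: "real ^ 'n \<Rightarrow> real" where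
  "l1 c = (\<Sum>i\<in>UNIV. \<bar>c $ i\<bar>)"

definition outer :: "real ^ 'n \<Rightarrow> real ^ 'n \<Rightarrow> real ^ 'n ^ 'n" where
  "outer u v = (\<chi> i j. u $ i * v $ j)"

end

theory Submission
  imports Defs
begin

text \<open>
  Write \<open>M = D\<^sub>c\<^sup>-\<^sup>1 - \<kappa>\<close>, so that \<open>\<Phi> = M\<^sup>-\<^sup>1\<close>. A direct factorisation shows
  \<open>A\<^sub>0 = M D\<^sub>w M - M\<close> with \<open>w\<^sub>i = c\<^sub>i \<mu>\<^sub>i / (\<mu>\<^sub>i - c\<^sub>i) > 0\<close>; in particular \<open>A\<^sub>0\<close>
  is symmetric and \<open>A = A\<^sub>0\<close>. On the other hand \<open>B\<^sup>-\<^sup>1 = \<Phi> - t c c\<^sup>T \<le> \<Phi>\<close> (with \<open>t > 0\<close>) in the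
  Loewner order, and inversion reverses this order, so \<open>B \<ge> M\<close>. Hence
  \<open>A + B \<ge> M D\<^sub>w M\<close>, which is positive definite because \<open>M\<close> is invertible.
\<close>

lemma
  fixes A :: "real^'n^'n"
  assumes "invertible A"
  shows matrix_inv_right: "A ** matrix_inv A = mat 1"
    and matrix_inv_left: "matrix_inv A ** A = mat 1"
proof -
  have "\<exists>A'. A ** A' = mat 1 \<and> A' ** A = mat 1"
    using assms unfolding invertible_def by blast
  then have "A ** matrix_inv A = mat 1 \<and> matrix_inv A ** A = mat 1"
    unfolding matrix_inv_def by (rule someI_ex)
  then show "A ** matrix_inv A = mat 1" "matrix_inv A ** A = mat 1" by auto
qed

lemma matrix_inv_unique:
  fixes A B :: "real^'n^'n"
  assumes "A ** B = mat 1"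
  shows "matrix_inv A = B"
proof -
  have "B ** A = mat 1" using assms matrix_left_right_inverse by blast
  with assms have "invertible A" unfolding invertible_def by blast
  have "matrix_inv A = matrix_inv A ** (A ** B)" using assms by simp
  also have "\<dots> = B"
    by (simp add: matrix_mul_assoc matrix_inv_left[OF \<open>invertible A\<close>])
  finally show ?thesis .
qed

lemma transpose_matrix_inv:
  fixes N :: "real^'n^'n"
  assumes "invertible N" "transpose N = N"
  shows "transpose (matrix_inv N) = matrix_inv N"
proof -
  have "N ** transpose (matrix_inv N) = mat 1"
    using arg_cong[OF matrix_inv_left[OF assms(1)], of transpose]
    by (simp add: matrix_transpose_mul assms(2))
  then show ?thesis using matrix_inv_unique by metis
qed

lemma matrix_diff_ldistrib: "(A::real^'n^'m) ** (B - C) = A ** B - A ** (C::real^'p^'n)"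
  by (vector matrix_matrix_mult_def sum_subtractf algebra_simps)

lemma matrix_diff_rdistrib: "((A::real^'n^'m) - B) ** (C::real^'p^'n) = A ** C - B ** C"
  by (vector matrix_matrix_mult_def sum_subtractf algebra_simps)

lemma transpose_add: "transpose (A + B :: real^'n^'m) = transpose A + transpose B"
  by (simp add: transpose_def vec_eq_iff)

lemma transpose_diff: "transpose (A - B :: real^'n^'m) = transpose A - transpose B"
  by (simp add: transpose_def vec_eq_iff)

lemma inner_transpose_matrix_vector: "x \<bullet> (transpose N *v y) = (N *v x) \<bullet> (y :: real^'n)"
  by (simp add: dot_lmul_matrix[symmetric] inner_commute)

lemma outer_mult_vector: "outer u v *v y = (v \<bullet> y) *\<^sub>R u"
  unfolding outer_def matrix_vector_mult_def inner_vec_def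
  by (simp add: vec_eq_iff sum_distrib_left sum_distrib_right mult_ac)

lemma diag_mat_mult_vector: "diag_mat d *v x = (\<chi> i. d $ i * x $ i)"
proof -
  have "\<And>i j. (if i = j then d $ i else 0) * x $ j = (if j = i then d $ i * x $ i else 0)"
    by auto
  then show ?thesis unfolding diag_mat_def matrix_vector_mult_def by (simp add: vec_eq_iff)
qed

lemma diag_mat_mult: "diag_mat d ** diag_mat e = diag_mat (\<chi> i. d $ i * e $ i)"
proof -
  have "\<And>i j k. (if i = k then d $ i else 0) * (if k = j then e $ k else 0)
                 = (if k = i then (if i = j then d $ i * e $ i else 0) else 0)"
    by auto
  then show ?thesis unfolding diag_mat_def matrix_matrix_mult_def by (simp add: vec_eq_iff)
qed

lemma diag_mat_diff: "diag_mat d - diag_mat e = diag_mat (d - e)"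
  unfolding diag_mat_def by (simp add: vec_eq_iff)

lemma mat_1_eq_diag_mat: "mat 1 = diag_mat (\<chi> i. (1::real))"
  unfolding diag_mat_def mat_def by (simp add: vec_eq_iff)

lemma transpose_diag_mat: "transpose (diag_mat d) = diag_mat d"
  unfolding diag_mat_def transpose_def by (simp add: vec_eq_iff)

lemma matrix_inv_diag_mat:
  assumes "\<And>i. d $ i \<noteq> (0::real)"
  shows "matrix_inv (diag_mat d) = diag_mat (\<chi> i. 1 / d $ i)"
  by (rule matrix_inv_unique) (simp add: assms diag_mat_mult mat_1_eq_diag_mat)

lemma pos_def_diag_mat:
  assumes "\<And>i. d $ i > 0"
  shows "pos_def_mat (diag_mat d)"
  unfolding pos_def_mat_def
proof (intro conjI allI impI)
  show "transpose (diag_mat d) = diag_mat d" by (rule transpose_diag_mat)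
  fix x :: "real^'a" assume "x \<noteq> 0"
  then obtain k where "x $ k \<noteq> 0" by (metis vec_eq_iff zero_index)
  have "0 < d $ k * (x $ k)\<^sup>2" using assms[of k] \<open>x $ k \<noteq> 0\<close> by simp
  also have "\<dots> \<le> (\<Sum>i\<in>UNIV. d $ i * (x $ i)\<^sup>2)"
    by (intro member_le_sum) (auto intro: mult_nonneg_nonneg less_imp_le[OF assms])
  also have "\<dots> = x \<bullet> (diag_mat d *v x)"
    by (simp add: diag_mat_mult_vector inner_vec_def power2_eq_square mult_ac)
  finally show "x \<bullet> (diag_mat d *v x) > 0" .
qed

lemma pos_def_invertible:
  fixes N :: "real^'n^'n"
  assumes "pos_def_mat N"
  shows "invertible N"
proof -
  have "\<forall>x. N *v x = 0 \<longrightarrow> x = 0"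
    using assms unfolding pos_def_mat_def by (metis inner_zero_right less_irrefl)
  then show ?thesis using matrix_left_invertible_ker invertible_left_inverse by blast
qed

lemma transpose_matrix_inv_pos_def:
  fixes N :: "real^'n^'n"
  assumes "pos_def_mat N"
  shows "transpose (matrix_inv N) = matrix_inv N"
  using assms transpose_matrix_inv pos_def_invertible unfolding pos_def_mat_def by blast

lemma pos_def_congruence:
  fixes P M :: "real^'n^'n"
  assumes "pos_def_mat P" "invertible M"
  shows "pos_def_mat (transpose M ** P ** M)"
  unfolding pos_def_mat_def
proof (intro conjI allI impI)
  show "transpose (transpose M ** P ** M) = transpose M ** P ** M"
    using assms(1) by (simp add: matrix_transpose_mul matrix_mul_assoc pos_def_mat_def)
  fix x :: "real^'n" assume "x \<noteq> 0"
  then have "M *v x \<noteq> 0"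
    using inj_matrix_vector_mult[OF assms(2)] by (metis injD matrix_vector_mult_0_right)
  then have "0 < (M *v x) \<bullet> (P *v (M *v x))" using assms(1) unfolding pos_def_mat_def by blast
  also have "(M *v x) \<bullet> (P *v (M *v x)) = x \<bullet> ((transpose M ** P ** M) *v x)"
    unfolding matrix_vector_mul_assoc[symmetric] by (rule inner_transpose_matrix_vector[symmetric])
  finally show "x \<bullet> ((transpose M ** P ** M) *v x) > 0" .
qed

lemma pos_def_add_pos_semidef:
  fixes P Q :: "real^'n^'n"
  assumes "pos_def_mat P" "transpose Q = Q" "\<And>x. x \<bullet> (Q *v x) \<ge> 0"
  shows "pos_def_mat (P + Q)"
  using assms unfolding pos_def_mat_def
  by (simp add: transpose_add matrix_vector_mult_add_rdistrib inner_add_right add_pos_nonneg)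

text \<open>
  With \<open>u = N\<^sup>-\<^sup>1 P y\<close> one has \<open>x \<bullet> N\<^sup>-\<^sup>1 x = x \<bullet> y + y \<bullet> P y + u \<bullet> N u\<close> for
  \<open>x = (N + P) y\<close>; no symmetry of \<open>P\<close> is needed.
\<close>
lemma inner_matrix_inv_add_ge:
  fixes N P :: "real^'n^'n" and y :: "real^'n"
  assumes N: "pos_def_mat N" and P: "\<And>v. v \<bullet> (P *v v) \<ge> 0"
  defines "x \<equiv> (N + P) *v y"
  shows "x \<bullet> y \<le> x \<bullet> (matrix_inv N *v x)"
proof -
  define u where "u = matrix_inv N *v (P *v y)"
  have inv: "invertible N" and symN: "transpose N = N"
    using N pos_def_invertible unfolding pos_def_mat_def by blast+
  have Nu: "N *v u = P *v y"
    by (simp add: u_def matrix_vector_mul_assoc matrix_mul_assoc matrix_inv_right[OF inv])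
  have "matrix_inv N *v x = y + u"
    by (simp add: x_def u_def matrix_vector_mult_add_rdistrib matrix_vector_right_distrib
        matrix_vector_mul_assoc matrix_inv_left[OF inv])
  then have "x \<bullet> (matrix_inv N *v x) = x \<bullet> y + ((N *v y) \<bullet> u + (P *v y) \<bullet> u)"
    by (simp add: x_def matrix_vector_mult_add_rdistrib inner_add_left inner_add_right)
  also have "(N *v y) \<bullet> u = y \<bullet> (P *v y)"
    using inner_transpose_matrix_vector[of y N u] by (simp add: symN Nu)
  also have "(P *v y) \<bullet> u = u \<bullet> (N *v u)" by (simp add: Nu inner_commute)
  finally show ?thesis
    using P[of y] N unfolding pos_def_mat_def
    by (cases "u = 0") (auto intro: less_imp_le)
qed

lemma loewner_matrix_inv_antimono:
  fixes M N :: "real^'n^'n"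
  assumes M: "pos_def_mat M" and N: "pos_def_mat N"
    and le: "\<And>v. v \<bullet> ((matrix_inv M - N) *v v) \<ge> 0"
  shows "x \<bullet> (M *v x) \<le> x \<bullet> (matrix_inv N *v x)"
proof -
  have "x = (N + (matrix_inv M - N)) *v (M *v x)"
    using matrix_inv_left[OF pos_def_invertible[OF M]] by (simp add: matrix_vector_mul_assoc)
  then show ?thesis
    using inner_matrix_inv_add_ge[OF N le, of "M *v x"]
    by (simp add: inner_transpose_matrix_vector[of x M x, symmetric] M[unfolded pos_def_mat_def])
qed

lemma pos_def_add_rank_one_update_gap:
  fixes P M :: "real^'n^'n" and c :: "real^'n"
  assumes P: "pos_def_mat P" and M: "pos_def_mat M" and t: "t \<ge> 0"
    and N: "pos_def_mat (matrix_inv M - t *\<^sub>R outer c c)"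
  shows "pos_def_mat (P + (matrix_inv (matrix_inv M - t *\<^sub>R outer c c) - M))"
proof (rule pos_def_add_pos_semidef[OF P])
  show "transpose (matrix_inv (matrix_inv M - t *\<^sub>R outer c c) - M)
        = matrix_inv (matrix_inv M - t *\<^sub>R outer c c) - M"
    using transpose_matrix_inv_pos_def[OF N] M by (simp add: transpose_diff pos_def_mat_def)
  have "v \<bullet> ((matrix_inv M - (matrix_inv M - t *\<^sub>R outer c c)) *v v) \<ge> 0" for v
    using t by (simp add: scaleR_matrix_vector_assoc[symmetric] outer_mult_vector
        inner_commute[of v c] mult.assoc)
  from loewner_matrix_inv_antimono[OF M N this]
  show "x \<bullet> ((matrix_inv (matrix_inv M - t *\<^sub>R outer c c) - M) *v x) \<ge> 0" for x
    by (simp add: matrix_vector_mult_diff_rdistrib inner_diff_right)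
qed

lemma A0_factorisation:
  fixes \<kappa> :: "real^'n^'n" and \<mu> c :: "real^'n"
  assumes c: "\<And>i. c $ i \<noteq> 0" and \<mu>c: "\<And>i. \<mu> $ i \<noteq> c $ i"
  defines "M \<equiv> matrix_inv (diag_mat c) - \<kappa>"
    and "w \<equiv> \<chi> i. c $ i * \<mu> $ i / (\<mu> $ i - c $ i)"
  shows "(mat 1 - \<kappa> ** diag_mat c) ** matrix_inv (diag_mat (\<mu> - c)) ** (mat 1 - diag_mat \<mu> ** \<kappa>)
         = M ** diag_mat w ** M - M"
proof -
  have \<mu>c': "\<And>i. \<mu> $ i - c $ i \<noteq> 0" using \<mu>c by simp
  have Dc_inv: "matrix_inv (diag_mat c) = diag_mat (\<chi> i. 1 / c $ i)"
    by (rule matrix_inv_diag_mat[OF c])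
  have E_inv: "matrix_inv (diag_mat (\<mu> - c)) = diag_mat (\<chi> i. 1 / (\<mu> $ i - c $ i))"
    using matrix_inv_diag_mat[of "\<mu> - c"] \<mu>c' by simp
  have left: "mat 1 - \<kappa> ** diag_mat c = M ** diag_mat c"
    by (simp add: M_def matrix_diff_rdistrib Dc_inv diag_mat_mult mat_1_eq_diag_mat c)
  have "diag_mat c ** matrix_inv (diag_mat (\<mu> - c)) ** (mat 1 - diag_mat \<mu> ** \<kappa>)
        = diag_mat (\<chi> i. c $ i / (\<mu> $ i - c $ i)) - diag_mat w ** \<kappa>"
    by (simp add: E_inv diag_mat_mult matrix_diff_ldistrib matrix_mul_assoc w_def mult_ac)
  also have "\<dots> = diag_mat w ** M - mat 1"
  proof -
    have "(\<chi> i. c $ i / (\<mu> $ i - c $ i)) = (\<chi> i. w $ i * (1 / c $ i)) - (\<chi> i. 1)"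
      using c \<mu>c' by (simp add: vec_eq_iff w_def field_simps)
    then show ?thesis
      by (simp add: M_def matrix_diff_ldistrib Dc_inv diag_mat_mult mat_1_eq_diag_mat diag_mat_diff)
  qed
  finally have right: "diag_mat c ** matrix_inv (diag_mat (\<mu> - c)) ** (mat 1 - diag_mat \<mu> ** \<kappa>)
                       = diag_mat w ** M - mat 1" .
  have "(mat 1 - \<kappa> ** diag_mat c) ** matrix_inv (diag_mat (\<mu> - c)) ** (mat 1 - diag_mat \<mu> ** \<kappa>)
        = M ** (diag_mat c ** matrix_inv (diag_mat (\<mu> - c)) ** (mat 1 - diag_mat \<mu> ** \<kappa>))"
    by (simp only: left matrix_mul_assoc)
  also have "\<dots> = M ** diag_mat w ** M - M"
    unfolding right by (simp add: matrix_diff_ldistrib matrix_mul_assoc)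
  finally show ?thesis .
qed

theorem mainTheorem4:
  fixes \<kappa> :: "real ^ 'n ^ 'n" and \<mu> c :: "real ^ 'n"
  assumes sym: "transpose \<kappa> = \<kappa>"
    and nonneg: "\<And>i j. \<kappa> $ i $ j \<ge> 0"
    and cpos: "\<And>i. c $ i > 0"
    and mupos: "\<And>i. \<mu> $ i > 0"
    and cmu: "\<And>i. c $ i < \<mu> $ i"
    and pd1: "pos_def_mat (matrix_inv (diag_mat c) - \<kappa>)"
    and den: "l1 c - (1/2) * (c \<bullet> (\<kappa> *v c)) > 0"
    and pd2: "pos_def_mat (matrix_inv (matrix_inv (diag_mat c) - \<kappa>)
                 - (1 / (l1 c - (1/2) * (c \<bullet> (\<kappa> *v c)))) *\<^sub>R outer c c)"
  shows "let \<Phi> = matrix_inv (matrix_inv (diag_mat c) - \<kappa>);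
             A0 = (mat 1 - \<kappa> ** diag_mat c) ** matrix_inv (diag_mat (\<mu> - c))
                    ** (mat 1 - diag_mat \<mu> ** \<kappa>);
             A = (1/2) *\<^sub>R (A0 + transpose A0);
             B = matrix_inv (\<Phi> - (1 / (l1 c - (1/2) * (c \<bullet> (\<kappa> *v c)))) *\<^sub>R outer c c)
         in pos_def_mat (A + B)"
proof -
  define t where "t = 1 / (l1 c - (1/2) * (c \<bullet> (\<kappa> *v c)))"
  define M where "M = matrix_inv (diag_mat c) - \<kappa>"
  define w where "w = (\<chi> i. c $ i * \<mu> $ i / (\<mu> $ i - c $ i))"
  define A0 where "A0 = (mat 1 - \<kappa> ** diag_mat c) ** matrix_inv (diag_mat (\<mu> - c))
                         ** (mat 1 - diag_mat \<mu> ** \<kappa>)"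
  define B where "B = matrix_inv (matrix_inv M - t *\<^sub>R outer c c)"
  have symM: "transpose M = M" using pd1 unfolding M_def pos_def_mat_def by simp
  have "\<And>i. c $ i \<noteq> 0" "\<And>i. \<mu> $ i \<noteq> c $ i"
    using cpos cmu by (metis less_irrefl)+
  then have A0: "A0 = M ** diag_mat w ** M - M"
    unfolding A0_def M_def w_def by (rule A0_factorisation)
  have symA0: "transpose A0 = A0"
    by (simp add: A0 symM transpose_diff matrix_transpose_mul transpose_diag_mat matrix_mul_assoc)
  have "\<And>i. w $ i > 0" unfolding w_def using cpos mupos cmu by simp
  then have "pos_def_mat (M ** diag_mat w ** M)"
    using pos_def_congruence[OF pos_def_diag_mat pos_def_invertible[OF pd1[folded M_def]]]
    by (simp add: symM)
  moreover have "t \<ge> 0" using den unfolding t_def by simp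
  ultimately have "pos_def_mat (M ** diag_mat w ** M + (B - M))"
    using pos_def_add_rank_one_update_gap pd1 pd2 unfolding B_def M_def t_def by blast
  moreover have "(1/2) *\<^sub>R (A0 + transpose A0) + B = M ** diag_mat w ** M + (B - M)"
    unfolding symA0 scaleR_half_double unfolding A0 by (simp only: diff_add_eq add_diff_eq)
  ultimately show ?thesis
    unfolding Let_def t_def[symmetric] M_def[symmetric] A0_def[symmetric] B_def[symmetric]
    by (simp only:)
qed

end
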